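(* Let $g:[0,\infty)\to\mathbb{R}$ satisfy $g(1)=0$ and $g(1/2)=1/2$, and suppose that the function $\hat H(a_1,\ldots,a_n)=g(a_1)+\cdots+g(a_n)-g(a_1+\cdots+a_n)$, defined on finite sequences of nonnegative reals with positive sum, is homogeneous (i.e. $\hat H(ca)=c\hat H(a)$ for all $c>0$) and continuous (for each $n$, as a function of $(a_1,\ldots,a_n)$). Then $g(a)=a\log_2(1/a)$ for every rational $a>0$.
   Context: All logarithms are to base $2$. *)

theory Defs
  imports "HOL-Analysis.Analysis"
begin

text \<open>A finite sequence (a_1,...,a_n) is represented by its length n and a function
  a :: nat => real, of which only the values a 0, ..., a (n-1) matter.\<close>

definition Hhat :: "(real \<Rightarrow> real) \<Rightarrow> nat \<Rightarrow> (nat \<Rightarrow> real) \<Rightarrow> real" where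
  "Hhat g n a = (\<Sum>i<n. g (a i)) - g (\<Sum>i<n. a i)"

definition Hdom :: "nat \<Rightarrow> (nat \<Rightarrow> real) set" where
  "Hdom n = {a. (\<forall>i<n. 0 \<le> a i) \<and> 0 < (\<Sum>i<n. a i)}"

text \<open>The same domain embedded in nat => real (product topology) by padding with
  zeros beyond index n; topologically this is the subset of R^n.\<close>
definition Hdom0 :: "nat \<Rightarrow> (nat \<Rightarrow> real) set" where
  "Hdom0 n = {a \<in> Hdom n. \<forall>i\<ge>n. a i = 0}"

end

theory Submission
  imports Defs
begin

text \<open>
  Put F x = g x + x log2 x.  The entropy-like function x log2 x has a
  homogeneous two-point defect F x + F y - F (x + y), and so does g (by homogeneity of Hhat),
  hence so does F; moreover F 1 = 0 and F (1/2) = 0.  Homogeneity of the defect alone forces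
  F (c n) = c F n + n F c for naturals n, so F behaves like a derivation: F (2^b) = 0 and
  n F (n^k) = k n^k F n.  Continuity of Hhat on sequences of length 2 bounds the defect
  F 1 + F t - F (1 + t) on (0,1]; writing n = 2^b + r and scaling by 2^b gives the linear
  bound |F n| <= 2 C n.  Applied to n^k this yields k |F n| <= 2 C n for all k, so F n = 0,
  and the derivation rule extends this to all positive rationals, i.e. g a = a log2 (1/a).
\<close>

definition defect :: "(real \<Rightarrow> real) \<Rightarrow> real \<Rightarrow> real \<Rightarrow> real" where
  "defect F x y = F x + F y - F (x + y)"

locale homogeneous_defect =
  fixes F :: "real \<Rightarrow> real"
  assumes F_one: "F 1 = 0"
    and defect_homogeneous:
      "\<And>x y c. 0 < x \<Longrightarrow> 0 < y \<Longrightarrow> 0 < c \<Longrightarrow> defect F (c * x) (c * y) = c * defect F x y"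
begin

lemma scale_nat:
  assumes "0 < c" "1 \<le> n"
  shows "F (c * real n) = c * F (real n) + real n * F c"
  using assms(2)
proof (induction n rule: dec_induct)
  case base
  then show ?case using F_one by simp
next
  case (step n)
  have "defect F (c * real n) (c * 1) = c * defect F (real n) 1"
    using defect_homogeneous[of "real n" 1 c] step assms(1) by simp
  then show ?case using step F_one by (simp add: defect_def algebra_simps)
qed

lemma pow2_zero:
  assumes "F 2 = 0"
  shows "F (2 ^ b) = 0"
proof (induction b)
  case 0
  then show ?case using F_one by simp
next
  case (Suc b)
  have "F (2 * real (2 ^ b)) = 2 * F (real (2 ^ b)) + real (2 ^ b) * F 2"
    by (rule scale_nat) auto
  then show ?case using Suc assms by simp
qed

text \<open>The power rule F (n^k) = k n^(k-1) F n, stated without division.\<close>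
lemma pow_nat:
  assumes "1 \<le> n"
  shows "real n * F (real n ^ k) = real k * real n ^ k * F (real n)"
proof (induction k)
  case 0
  then show ?case using F_one by simp
next
  case (Suc k)
  have "F (real n ^ k * real n) = real n ^ k * F (real n) + real n * F (real n ^ k)"
    by (rule scale_nat) (use assms in auto)
  then show ?case using Suc by (simp add: algebra_simps)
qed

text \<open>Splitting off the leading binary digit: n = 2^b + r with 0 < r < 2^b.  Scaling the
  defect at (1, r / 2^b) by 2^b shows F n differs from F r by at most 2^b C.\<close>
lemma leading_digit_step:
  assumes F2: "F 2 = 0"
    and bound: "\<And>t. 0 < t \<Longrightarrow> t \<le> 1 \<Longrightarrow> \<bar>defect F 1 t\<bar> \<le> C"
    and r: "1 \<le> r" "r < 2 ^ b"
  shows "\<bar>F (2 ^ b + real r)\<bar> \<le> \<bar>F (real r)\<bar> + 2 ^ b * C"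
proof -
  define y where "y = real r / 2 ^ b"
  have y: "0 < y" "y \<le> 1" using r unfolding y_def by (auto simp: field_simps)
  have ry: "real r = 2 ^ b * y" unfolding y_def by simp
  have "defect F (2 ^ b * 1) (2 ^ b * y) = 2 ^ b * defect F 1 y"
    by (rule defect_homogeneous) (use y in auto)
  then have "F (2 ^ b + real r) = F (real r) - 2 ^ b * defect F 1 y"
    using pow2_zero[OF F2, of b] ry by (simp add: defect_def)
  moreover have "\<bar>2 ^ b * defect F 1 y\<bar> \<le> 2 ^ b * C"
    using bound[OF y] by (simp add: abs_mult)
  ultimately show ?thesis by linarith
qed

lemma linear_bound:
  assumes F2: "F 2 = 0"
    and bound: "\<And>t. 0 < t \<Longrightarrow> t \<le> 1 \<Longrightarrow> \<bar>defect F 1 t\<bar> \<le> C"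
    and C: "0 \<le> C" and n: "1 \<le> n"
  shows "\<bar>F (real n)\<bar> \<le> 2 * C * real n"
proof -
  have "\<forall>n. 1 \<le> n \<and> n < (2::nat) ^ b \<longrightarrow> \<bar>F (real n)\<bar> \<le> 2 * C * real n" for b
  proof (induction b)
    case 0
    then show ?case by simp
  next
    case (Suc b)
    show ?case
    proof (intro allI impI)
      fix n :: nat
      assume n: "1 \<le> n \<and> n < 2 ^ Suc b"
      consider "n < 2 ^ b" | "n = 2 ^ b" | r where "n = 2 ^ b + r" "1 \<le> r" "r < 2 ^ b"
      proof (cases "n \<le> 2 ^ b")
        case False
        then have "n = 2 ^ b + (n - 2 ^ b)" "1 \<le> n - 2 ^ b" "n - 2 ^ b < 2 ^ b"
          using n by auto
        then show thesis using that(3) by blast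
      qed (use that in linarith)
      then show "\<bar>F (real n)\<bar> \<le> 2 * C * real n"
      proof cases
        case 1
        then show ?thesis using Suc n by auto
      next
        case 2
        then show ?thesis using pow2_zero[OF F2, of b] C by simp
      next
        case (3 r)
        have "\<bar>F (real n)\<bar> \<le> \<bar>F (real r)\<bar> + 2 ^ b * C"
          using leading_digit_step[OF F2 bound 3(2,3)] 3(1) by simp
        also have "\<dots> \<le> 2 * C * real r + 2 ^ b * C" using Suc 3 by auto
        also have "\<dots> \<le> 2 * C * real n" using 3(1) C by (simp add: algebra_simps)
        finally show ?thesis .
      qed
    qed
  qed
  then show ?thesis using n less_exp[of n] by blast
qed

text \<open>A linear bound is incompatible with F (n^k) = k n^(k-1) F n unless F n = 0.\<close>
lemma linear_bound_imp_zero: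
  assumes bound: "\<And>m. 1 \<le> m \<Longrightarrow> \<bar>F (real m)\<bar> \<le> K * real m" and n: "1 \<le> n"
  shows "F (real n) = 0"
proof (rule ccontr)
  assume nz: "F (real n) \<noteq> 0"
  obtain k :: nat where k: "K * real n / \<bar>F (real n)\<bar> < real k"
    using reals_Archimedean2 by blast
  have np: "0 < real n" using n by simp
  have "\<bar>F (real (n ^ k))\<bar> \<le> K * real (n ^ k)" by (rule bound) (use n in simp)
  then have "\<bar>real n * F (real n ^ k)\<bar> \<le> real n * (K * real n ^ k)"
    using np by (simp add: abs_mult)
  then have "real n ^ k * (real k * \<bar>F (real n)\<bar>) \<le> real n ^ k * (K * real n)"
    unfolding pow_nat[OF n] using np by (simp add: abs_mult algebra_simps)
  then have "real k * \<bar>F (real n)\<bar> \<le> K * real n"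
    using np by simp
  moreover have "K * real n < real k * \<bar>F (real n)\<bar>"
    using k nz by (simp add: field_simps)
  ultimately show False by simp
qed

lemma zero_on_rationals:
  assumes nat_zero: "\<And>n. 1 \<le> n \<Longrightarrow> F (real n) = 0" and a: "a \<in> \<rat>" "0 < a"
  shows "F a = 0"
proof -
  obtain m k :: nat where k: "k \<noteq> 0" and mk: "\<bar>a\<bar> = real m / real k"
    using Rats_abs_nat_div_natE[OF a(1)] by metis
  have am: "a * real k = real m" using mk k a(2) by (simp add: field_simps)
  have "0 < a * real k" using a(2) k by simp
  then have m: "1 \<le> m" using am by simp
  have "F (a * real k) = a * F (real k) + real k * F a" by (rule scale_nat) (use a k in auto)
  then have "real k * F a = 0" using am nat_zero[OF m] nat_zero[of k] k by simp
  then show ?thesis using k by simp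
qed

end

text \<open>The entropy term x log2 x has homogeneous defect: scaling by c adds x c log2 c to each
  term, and these contributions cancel in the defect.\<close>
lemma xlogx_defect_homogeneous:
  fixes x y c :: real
  assumes "0 < x" "0 < y" "0 < c"
  shows "defect (\<lambda>x. x * log 2 x) (c * x) (c * y) = c * defect (\<lambda>x. x * log 2 x) x y"
proof -
  have scale: "(c * z) * log 2 (c * z) = c * (z * log 2 z) + z * (c * log 2 c)" if "0 < z" for z
    using that assms(3) by (simp add: log_mult algebra_simps)
  have "c * x + c * y = c * (x + y)" by (simp add: algebra_simps)
  then show ?thesis
    using scale[of x] scale[of y] scale[of "x + y"] assms by (simp add: defect_def algebra_simps)
qed

text \<open>A crude bound on the entropy term over (0,2], enough to transfer the boundedness of
  the defect from g to F.\<close>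
lemma xlogx_bound:
  fixes t :: real
  assumes "0 < t" "t \<le> 2"
  shows "\<bar>t * log 2 t\<bar> \<le> 2"
proof (cases "t \<le> 1")
  case True
  have ln2: "ln 2 \<ge> (1/2::real)"
    using ln_le_minus_one[of "1/2"] by (simp add: ln_div)
  have "ln (1/t) \<le> 1/t - 1" using ln_le_minus_one[of "1/t"] assms by simp
  then have "- (t * ln t) \<le> 1 - t" using assms by (simp add: ln_div field_simps)
  moreover have "t * ln t \<le> 0" using assms True by (simp add: mult_nonneg_nonpos)
  ultimately have "\<bar>t * ln t\<bar> \<le> 1" using assms by linarith
  then have "\<bar>t * ln t\<bar> / ln 2 \<le> 1 / (1/2)" using ln2 by (intro frac_le) auto
  then show ?thesis by (simp add: log_def)
next
  case False
  have l: "0 \<le> log 2 t" "log 2 t \<le> 1" using assms False by auto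
  have "t * log 2 t \<le> 2 * 1" using assms l by (intro mult_mono) auto
  then show ?thesis using assms l by (simp add: abs_mult)
qed

lemma Hhat_two: "Hhat g 2 a = defect g (a 0) (a 1)"
  by (simp add: Hhat_def defect_def numeral_2_eq_2)

lemma defect_homogeneous_of_Hhat:
  assumes homog: "\<And>n a c. a \<in> Hdom n \<Longrightarrow> 0 < c \<Longrightarrow>
                    Hhat g n (\<lambda>i. c * a i) = c * Hhat g n a"
    and "0 < x" "0 < y" "0 < c"
  shows "defect g (c * x) (c * y) = c * defect g x y"
proof -
  let ?a = "\<lambda>i::nat. if i = 0 then x else y"
  have "?a \<in> Hdom 2" using assms(2,3) by (simp add: Hdom_def numeral_2_eq_2)
  from homog[OF this assms(4)] show ?thesis by (simp add: Hhat_two)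
qed

text \<open>Continuity of Hhat on the compact segment {(1,t) | 0 <= t <= 1} bounds the defect.\<close>
lemma defect_bounded_of_continuous:
  assumes cont: "continuous_on (Hdom0 2) (Hhat g 2)"
  obtains B where "\<And>t. 0 \<le> t \<Longrightarrow> t \<le> 1 \<Longrightarrow> \<bar>defect g 1 t\<bar> \<le> B"
proof -
  define e where "e t = (\<lambda>i::nat. if i = 0 then 1 else if i = 1 then t else (0::real))"
    for t :: real
  have "continuous_on {0..1} e"
  proof (rule continuous_on_coordinatewise_then_product)
    fix i :: nat
    show "continuous_on {0..1} (\<lambda>t. e t i)"
      by (cases "i = 0"; cases "i = 1") (simp_all add: e_def continuous_on_id)
  qed
  moreover have "e ` {0..1} \<subseteq> Hdom0 2"
    by (auto simp: e_def Hdom0_def Hdom_def numeral_2_eq_2)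
  ultimately have "continuous_on {0..1} (Hhat g 2 \<circ> e)"
    using continuous_on_compose continuous_on_subset[OF cont] by blast
  then have "bounded ((Hhat g 2 \<circ> e) ` {0..1})"
    by (simp add: compact_continuous_image compact_imp_bounded)
  then obtain B where B: "\<And>x. x \<in> (Hhat g 2 \<circ> e) ` {0..1} \<Longrightarrow> norm x \<le> B"
    by (auto simp: bounded_iff)
  have "\<bar>defect g 1 t\<bar> \<le> B" if "0 \<le> t" "t \<le> 1" for t
    using B[of "Hhat g 2 (e t)"] that by (simp add: Hhat_two e_def)
  then show ?thesis using that by blast
qed

theorem mainTheorem4:
  fixes g :: "real \<Rightarrow> real"
  assumes g1: "g 1 = 0"
    and ghalf: "g (1/2) = 1/2"
    and homog: "\<And>n a c. a \<in> Hdom n \<Longrightarrow> 0 < c \<Longrightarrow>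
                  Hhat g n (\<lambda>i. c * a i) = c * Hhat g n a"
    and cont: "\<And>n. continuous_on (Hdom0 n) (Hhat g n)"
  shows "\<And>a. a \<in> \<rat> \<Longrightarrow> 0 < a \<Longrightarrow> g a = a * log 2 (1 / a)"
proof -
  define F where "F x = g x + x * log 2 x" for x
  have defect_F: "defect F x y = defect g x y + defect (\<lambda>x. x * log 2 x) x y" for x y
    by (simp add: defect_def F_def)
  interpret F: homogeneous_defect F
    by unfold_locales (use g1 defect_homogeneous_of_Hhat[OF homog] xlogx_defect_homogeneous
        in \<open>simp_all add: F_def defect_F distrib_left\<close>)
  have "F (1/2 * real 2) = 1/2 * F (real 2) + real 2 * F (1/2)" by (rule F.scale_nat) auto
  then have F2: "F 2 = 0" using ghalf g1 by (simp add: F_def log_divide)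
  obtain B where B: "\<And>t. 0 \<le> t \<Longrightarrow> t \<le> 1 \<Longrightarrow> \<bar>defect g 1 t\<bar> \<le> B"
    using defect_bounded_of_continuous[OF cont] by blast
  have bound: "\<bar>defect F 1 t\<bar> \<le> B + 4" if "0 < t" "t \<le> 1" for t
  proof -
    have "defect F 1 t = defect g 1 t + t * log 2 t - (1 + t) * log 2 (1 + t)"
      by (simp add: F_def defect_def)
    moreover have "\<bar>defect g 1 t\<bar> \<le> B" using B that by simp
    ultimately show ?thesis using xlogx_bound[of t] xlogx_bound[of "1 + t"] that by linarith
  qed
  have "0 \<le> B + 4" using B[of 1] by simp
  then have "F (real n) = 0" if "1 \<le> n" for n
    using F.linear_bound_imp_zero[OF F.linear_bound[OF F2 bound]] that by blast
  then show "g a = a * log 2 (1 / a)" if "a \<in> \<rat>" "0 < a" for a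
    using F.zero_on_rationals[OF _ that] that by (simp add: F_def log_divide)
qed

end
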